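(* Let $m\ge 0$ and let $n,k$ be integers with $0\le n,k<4\cdot 3^m$. Then $$\binom{n+4\cdot 3^m}{k}_F\equiv \begin{cases}\ \ \binom{n}{k}_F & \text{if } k \text{ is even},\\ -\binom{n}{k}_F & \text{if } k \text{ is odd},\end{cases}\pmod 3,$$ $$\binom{n+8\cdot 3^m}{k}_F\equiv \binom{n}{k}_F \pmod 3,$$ and $$\binom{n+8\cdot 3^m}{k+4\cdot 3^m}_F\equiv \begin{cases}-\binom{n}{k}_F & \text{if } n \text{ is even},\\ \ \ \binom{n}{k}_F & \text{if } n \text{ is odd},\end{cases}\pmod 3.$$
   Context: The Fibonacci numbers are defined by $F_0=0$, $F_1=1$, $F_n=F_{n-1}+F_{n-2}$ for $n\ge 2$. For $n\ge 0$ let $n!_F=F_1F_2\cdots F_n$ (with $0!_F=1$), and for $0\le k\le n$ define the Fibonomial coefficient $\binom{n}{k}_F=\dfrac{n!_F}{k!_F\,(n-k)!_F}$; by convention $\binom{n}{k}_F=0$ if $k<0$ or $k>n$. Note $\binom{n}{k}_F=\binom{n}{n-k}_F$. *)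

theory Defs
  imports Main "HOL-Number_Theory.Cong"
begin

fun fibo :: "nat \<Rightarrow> int" where
  "fibo 0 = 0"
| "fibo (Suc 0) = 1"
| "fibo (Suc (Suc n)) = fibo (Suc n) + fibo n"

definition fibfact :: "nat \<Rightarrow> int" where
  "fibfact n = (\<Prod>i=1..n. fibo i)"

text \<open>Fibonomial coefficient; the quotient is exact (it is a known integer), 0 outside 0 <= k <= n.\<close>
definition fibonomial :: "nat \<Rightarrow> nat \<Rightarrow> int" where
  "fibonomial n k = (if k \<le> n then fibfact n div (fibfact k * fibfact (n - k)) else 0)"

end

theory Submission
  imports Defs "HOL-Library.Numeral_Type" "HOL-Number_Theory.Fib"
begin

text \<open>The Fibonomials satisfy the Pascal-type recurrence
  \<open>C(n+1,k+1) = F(n-k+1) C(n,k) + F(k) C(n,k+1)\<close>, a consequence of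
  \<open>F(a+b+1) = F(a+1) F(b+1) + F(a) F(b)\<close>. Modulo 3 we have \<open>F(j+4) = -F(j)\<close>, and with the
  recurrence this yields, for \<open>N = 4\<close>, the shift rule
  \<open>C(n+N,k) = (-1)^k C(n,k) + (-1)^(n+k) C(n,k-N)\<close> (the last term only for \<open>k \<ge> N\<close>).
  Applying the rule for \<open>N\<close> three times gives the rule for \<open>3N\<close>, because the binomial
  coefficients 3 arising in between vanish modulo 3. Hence the rule holds for \<open>N = 4\<cdot>3^m\<close>,
  and all three congruences are instances of it and of its twofold application.\<close>

lemma fibo_eq_fib: "fibo n = int (fib n)"
  by (induction n rule: fib.induct) auto

lemma fibfact_Suc: "fibfact (Suc n) = fibfact n * fibo (Suc n)"
  unfolding fibfact_def by (simp add: prod.atLeast1_atMost_eq [symmetric] mult.commute)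

lemma fibfact_pos: "fibfact n > 0"
  by (induction n) (simp_all add: fibfact_def fibfact_Suc fibo_eq_fib fib_neq_0_nat)

fun fibonomial_rec :: "nat \<Rightarrow> nat \<Rightarrow> int" where
  "fibonomial_rec n 0 = 1"
| "fibonomial_rec 0 (Suc k) = 0"
| "fibonomial_rec (Suc n) (Suc k) =
     fibo (n - k + 1) * fibonomial_rec n k + fibo k * fibonomial_rec n (Suc k)"

lemma fibonomial_rec_eq_0: "n < k \<Longrightarrow> fibonomial_rec n k = 0"
  by (induction n k rule: fibonomial_rec.induct) auto

lemma fibonomial_rec_mult_fibfact:
  "k \<le> n \<Longrightarrow> fibonomial_rec n k * fibfact k * fibfact (n - k) = fibfact n"
proof (induction n k rule: fibonomial_rec.induct)
  case (1 n)
  then show ?case by (simp add: fibfact_def)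
next
  case (2 k)
  then show ?case by simp
next
  case (3 n j)
  then have jn: "j \<le> n" by simp
  have left: "fibonomial_rec n j * fibfact j * fibfact (n - j) = fibfact n"
    using "3.IH"(1) jn .
  have right: "fibo j * fibonomial_rec n (Suc j) * fibfact (Suc j) * fibfact (n - j)
      = fibo j * fibo (n - j) * fibfact n"
  proof (cases "j < n")
    case True
    then have "fibfact (n - j) = fibfact (n - Suc j) * fibo (n - j)"
      using fibfact_Suc[of "n - Suc j"] by (simp add: Suc_diff_Suc)
    with "3.IH"(2) True show ?thesis by (simp add: algebra_simps)
  qed (use jn in \<open>simp add: fibonomial_rec_eq_0\<close>)
  have fib_split: "fibo (Suc n) = fibo (Suc j) * fibo (n - j + 1) + fibo j * fibo (n - j)"
    using fib_add[of j "n - j"] jn by (simp add: fibo_eq_fib)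
  have "fibonomial_rec (Suc n) (Suc j) * fibfact (Suc j) * fibfact (Suc n - Suc j)
      = fibo (n - j + 1) * (fibonomial_rec n j * fibfact j * fibfact (n - j)) * fibo (Suc j)
        + fibo j * fibonomial_rec n (Suc j) * fibfact (Suc j) * fibfact (n - j)"
    by (simp add: fibfact_Suc algebra_simps)
  also have "\<dots> = fibfact n * fibo (Suc n)"
    using left right fib_split by (simp add: algebra_simps)
  finally show ?case by (simp add: fibfact_Suc)
qed

lemma fibonomial_eq_rec: "fibonomial n k = fibonomial_rec n k"
proof (cases "k \<le> n")
  case True
  have "fibfact k * fibfact (n - k) \<noteq> 0"
    using fibfact_pos by (simp add: less_le)
  then show ?thesis
    using fibonomial_rec_mult_fibfact[OF True] True unfolding fibonomial_def
    by (metis mult.assoc nonzero_mult_div_cancel_right)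
qed (simp add: fibonomial_def fibonomial_rec_eq_0)

definition fib_mod3 :: "nat \<Rightarrow> 3" where
  "fib_mod3 j = of_int (fibo j)"

definition fibonomial_mod3 :: "nat \<Rightarrow> nat \<Rightarrow> 3" where
  "fibonomial_mod3 n k = of_int (fibonomial n k)"

lemma cong_mod3_iff: "[a = b] (mod 3) \<longleftrightarrow> (of_int a :: 3) = of_int b"
  by (simp add: of_int_eq_iff_cong_CHAR)

lemma three_eq_0: "(3::3) = 0"
  using of_nat_CHAR[where 'a=3] by simp

lemma two_eq_minus_1: "(2::3) = -1"
proof -
  have "(2::3) + 1 = 0" using three_eq_0 by simp
  then show ?thesis by (simp add: eq_neg_iff_add_eq_0)
qed

lemma fib_mod3_add_4: "fib_mod3 (j + 4) = - fib_mod3 j"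
proof -
  have "fibo (j + 4) = 3 * fibo (j + 1) + 2 * fibo j"
    by (simp add: eval_nat_numeral)
  then show ?thesis by (simp add: fib_mod3_def three_eq_0 two_eq_minus_1)
qed

lemma fibonomial_mod3_0_right [simp]: "fibonomial_mod3 n 0 = 1"
  by (simp add: fibonomial_mod3_def fibonomial_eq_rec)

lemma fibonomial_mod3_eq_0: "n < k \<Longrightarrow> fibonomial_mod3 n k = 0"
  by (simp add: fibonomial_mod3_def fibonomial_def)

lemma fibonomial_mod3_Suc_Suc:
  "fibonomial_mod3 (Suc n) (Suc k)
     = fib_mod3 (n - k + 1) * fibonomial_mod3 n k + fib_mod3 k * fibonomial_mod3 n (Suc k)"
  by (simp add: fibonomial_mod3_def fib_mod3_def fibonomial_eq_rec)

definition shift_rule :: "nat \<Rightarrow> bool" where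
  "shift_rule N \<longleftrightarrow> (\<forall>n k. fibonomial_mod3 (n + N) k = (-1) ^ k * fibonomial_mod3 n k
     + (if N \<le> k then (-1) ^ (n + k) * fibonomial_mod3 n (k - N) else 0))"

lemma shift_ruleD:
  "shift_rule N \<Longrightarrow> fibonomial_mod3 (n + N) k = (-1) ^ k * fibonomial_mod3 n k
     + (if N \<le> k then (-1) ^ (n + k) * fibonomial_mod3 n (k - N) else 0)"
  unfolding shift_rule_def by blast

lemma fibonomial_mod3_4:
  "fibonomial_mod3 4 k = (if k = 0 \<or> k = 4 then 1 else 0)"
proof -
  have "k = 0 \<or> k = 1 \<or> k = 2 \<or> k = 3 \<or> k = 4 \<or> 4 < k" by auto
  then show ?thesis
    by (elim disjE) (auto simp: fibonomial_mod3_def fibonomial_def fibfact_def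
        eval_nat_numeral three_eq_0)
qed

lemma fib_mod3_shift_mult:
  "fib_mod3 (n + 4 - j + 1) * fibonomial_mod3 n j = - (fib_mod3 (n - j + 1) * fibonomial_mod3 n j)"
proof (cases "j \<le> n")
  case True
  then have "n + 4 - j + 1 = (n - j + 1) + 4" by simp
  then have "fib_mod3 (n + 4 - j + 1) = - fib_mod3 (n - j + 1)"
    by (simp only: fib_mod3_add_4)
  then show ?thesis by simp
qed (simp add: fibonomial_mod3_eq_0)

text \<open>For \<open>j \<ge> 4\<close> this is the recurrence for \<open>C(n+1,j-3)\<close> together with
  \<open>F(j) \<equiv> -F(j-4)\<close>; for \<open>j = 3\<close> it reduces to \<open>F(3) = 2 \<equiv> -1\<close>.\<close>
lemma shift_rule_4_correction:
  "fib_mod3 (n + 4 - j + 1) * (if 4 \<le> j then (-1) ^ (n + j) * fibonomial_mod3 n (j - 4) else 0)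
   + fib_mod3 j * (if 4 \<le> Suc j then (-1) ^ (n + Suc j) * fibonomial_mod3 n (Suc j - 4) else 0)
   = (if 4 \<le> Suc j then (-1) ^ (Suc n + Suc j) * fibonomial_mod3 (Suc n) (Suc j - 4) else 0)"
proof -
  consider "j < 3" | "j = 3" | i where "j = i + 4"
  proof (cases "4 \<le> j")
    case True
    then show ?thesis using that(3)[of "j - 4"] by simp
  qed (use that(1,2) in linarith)
  then show ?thesis
  proof cases
    case 3
    have "Suc j - 4 = Suc i" using 3 by simp
    then show ?thesis
      using 3 by (simp add: fibonomial_mod3_Suc_Suc fib_mod3_add_4 power_add algebra_simps)
  qed (simp_all add: fib_mod3_def eval_nat_numeral two_eq_minus_1)
qed

lemma shift_rule_4: "shift_rule 4"
  unfolding shift_rule_def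
proof (intro allI)
  fix n k
  show "fibonomial_mod3 (n + 4) k = (-1) ^ k * fibonomial_mod3 n k
     + (if 4 \<le> k then (-1) ^ (n + k) * fibonomial_mod3 n (k - 4) else 0)"
  proof (induction n arbitrary: k)
    case 0
    show ?case by (simp add: fibonomial_mod3_4 fibonomial_mod3_eq_0)
  next
    case (Suc n)
    show ?case
    proof (cases k)
      case (Suc j)
      have "fibonomial_mod3 (Suc n + 4) k
          = fib_mod3 (n + 4 - j + 1) * fibonomial_mod3 (n + 4) j
            + fib_mod3 j * fibonomial_mod3 (n + 4) (Suc j)"
        using Suc fibonomial_mod3_Suc_Suc[of "n + 4" j] by simp
      also have "\<dots> = fib_mod3 (n + 4 - j + 1) * fibonomial_mod3 n j * (-1) ^ j
            + fib_mod3 j * fibonomial_mod3 n (Suc j) * (-1) ^ Suc j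
            + (fib_mod3 (n + 4 - j + 1)
                 * (if 4 \<le> j then (-1) ^ (n + j) * fibonomial_mod3 n (j - 4) else 0)
               + fib_mod3 j * (if 4 \<le> Suc j
                   then (-1) ^ (n + Suc j) * fibonomial_mod3 n (Suc j - 4) else 0))"
        unfolding Suc.IH[of j] Suc.IH[of "Suc j"] by (simp add: algebra_simps)
      also have "\<dots> = (-1) ^ Suc j * (fib_mod3 (n - j + 1) * fibonomial_mod3 n j
            + fib_mod3 j * fibonomial_mod3 n (Suc j))
          + (if 4 \<le> Suc j then (-1) ^ (Suc n + Suc j) * fibonomial_mod3 (Suc n) (Suc j - 4) else 0)"
        unfolding fib_mod3_shift_mult shift_rule_4_correction by (simp add: algebra_simps)
      finally show ?thesis
        using Suc by (simp add: fibonomial_mod3_Suc_Suc)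
    qed simp
  qed
qed

lemma shift_rule_double:
  assumes "shift_rule N" and "even N"
  shows "fibonomial_mod3 (n + 2 * N) k = fibonomial_mod3 n k
    + (if N \<le> k then 2 * (-1) ^ n * fibonomial_mod3 n (k - N) else 0)
    + (if 2 * N \<le> k then fibonomial_mod3 n (k - 2 * N) else 0)"
proof -
  note rule = shift_ruleD[OF assms(1)]
  have split: "n + 2 * N = (n + N) + N" by simp
  show ?thesis
  proof (cases "N \<le> k")
    case True
    then obtain j where j: "k = N + j" by (metis le_add_diff_inverse)
    show ?thesis
      unfolding split rule[of "n + N"] rule[of n] using j assms(2)
      by (simp add: power_add algebra_simps)
  qed (simp add: split rule)
qed

lemma shift_rule_triple:
  assumes "shift_rule N" and "even N"
  shows "shift_rule (3 * N)"
  unfolding shift_rule_def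
proof (intro allI)
  fix n k
  note rule = shift_ruleD[OF assms(1)] and double = shift_rule_double[OF assms]
  have split: "n + 3 * N = (n + 2 * N) + N" by simp
  show "fibonomial_mod3 (n + 3 * N) k = (-1) ^ k * fibonomial_mod3 n k
     + (if 3 * N \<le> k then (-1) ^ (n + k) * fibonomial_mod3 n (k - 3 * N) else 0)"
  proof (cases "N \<le> k")
    case True
    then obtain j where j: "k = N + j" by (metis le_add_diff_inverse)
    have "fibonomial_mod3 (n + 3 * N) k = (-1) ^ k * fibonomial_mod3 n k
        + 3 * (-1) ^ (n + k) * fibonomial_mod3 n j
        + (if N \<le> j then 3 * (-1) ^ k * fibonomial_mod3 n (j - N) else 0)
        + (if 2 * N \<le> j then (-1) ^ (n + k) * fibonomial_mod3 n (j - 2 * N) else 0)"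
      unfolding split rule[of "n + 2 * N"] double[of n k] double[of n "k - N"] using j assms(2)
      by (simp add: power_add algebra_simps)
    then show ?thesis using j by (simp add: three_eq_0)
  qed (unfold split rule double, simp)
qed

lemma shift_rule_4_mult_pow3: "shift_rule (4 * 3 ^ m)"
proof (induction m)
  case 0
  show ?case using shift_rule_4 by simp
next
  case (Suc m)
  have "shift_rule (3 * (4 * 3 ^ m))" by (rule shift_rule_triple[OF Suc]) simp
  then show ?case by (simp add: algebra_simps)
qed

theorem mainTheorem5:
  fixes m n k :: nat
  assumes "n < 4 * 3 ^ m" and "k < 4 * 3 ^ m"
  shows "[fibonomial (n + 4 * 3 ^ m) k = (if even k then fibonomial n k else - fibonomial n k)] (mod 3) \<and>
    [fibonomial (n + 8 * 3 ^ m) k = fibonomial n k] (mod 3) \<and>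
    [fibonomial (n + 8 * 3 ^ m) (k + 4 * 3 ^ m) = (if even n then - fibonomial n k else fibonomial n k)] (mod 3)"
proof -
  define N :: nat where "N = 4 * 3 ^ m"
  have n: "n < N" and k: "k < N" and N: "shift_rule N" "even N"
    using assms shift_rule_4_mult_pow3[of m] by (simp_all add: N_def)
  have "fibonomial_mod3 (n + N) k = (-1) ^ k * fibonomial_mod3 n k"
    using shift_ruleD[OF N(1), of n k] k by simp
  moreover have "fibonomial_mod3 (n + 2 * N) k = fibonomial_mod3 n k"
    using shift_rule_double[OF N, of n k] k by simp
  moreover have "fibonomial_mod3 (n + 2 * N) (k + N) = - ((-1) ^ n * fibonomial_mod3 n k)"
    using shift_rule_double[OF N, of n "k + N"] n k
    by (simp add: fibonomial_mod3_eq_0 two_eq_minus_1)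
  moreover have "8 * 3 ^ m = 2 * N" by (simp add: N_def)
  ultimately show ?thesis
    unfolding cong_mod3_iff \<open>8 * 3 ^ m = 2 * N\<close> N_def[symmetric]
    by (simp add: fibonomial_mod3_def minus_one_power_iff)
qed

end
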